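(* Let $A$ be a bivariate copula and $K_A$ a version of its Markov kernel such that the function $(x,y)\mapsto K_A(x,[0,y])$ on $[0,1]^2$ has a discontinuity. Then the sequence $(\Delta_N)_{N\in\mathbb{N}}$ given by $$\Delta_N:=\sup_{(x,y)\in[0,1]^2}\left|K_{\mathcal{CB}_N(A)}(x,[0,y])-K_A(x,[0,y])\right|$$ does not converge to $0$ as $N\to\infty$.
   Context: A (bivariate) copula is a distribution function on $[0,1]^2$ with uniform marginals; each copula $B$ corresponds to a doubly stochastic measure $\mu_B$ with $B(x,y)=\mu_B([0,x]\times[0,y])$. A Markov kernel of $B$ is a map $K_B:[0,1]\times\mathcal{B}([0,1])\to[0,1]$, measurable in the first argument, a probability measure in the second, with $\int_{E_1}K_B(x,E_2)\,d\lambda(x)=\mu_B(E_1\times E_2)$ for all Borel $E_1,E_2$ ($\lambda$ = Lebesgue measure). Checkerboard approximation: $I_1^N=[0,\tfrac1N]$, $I_i^N=(\tfrac{i-1}N,\tfrac iN]$ ($i=2,\dots,N$), $Q_{i,j}^N=I_i^N\times I_j^N$; $\mathcal{CB}_N(A)$ is the absolutely continuous copula with density $N^2\sum_{i,j=1}^N\mu_A(Q^N_{i,j})\mathbf 1_{Q^N_{i,j}}$, and its Markov kernel is the version $K_{\mathcal{CB}_N(A)}(x,[0,y])=N^2\sum_{i,j=1}^N\mu_A(Q^N_{i,j})\mathbf 1_{I^N_i}(x)\,\lambda([0,y]\cap I^N_j)$. *)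

theory Defs
  imports "HOL-Analysis.Analysis"
begin

text \<open>A (bivariate) copula is identified with its doubly stochastic measure mu
  on the Borel sets of the plane: a measure concentrated on the unit square
  with uniform marginals (so B(x,y) = mu([0,x] x [0,y]) is the copula).\<close>
definition doubly_stochastic :: "(real \<times> real) measure \<Rightarrow> bool" where
  "doubly_stochastic \<mu> \<longleftrightarrow>
     sets \<mu> = sets (borel :: (real \<times> real) measure) \<and>
     emeasure \<mu> (UNIV - {0..1} \<times> {0..1}) = 0 \<and>
     (\<forall>E \<in> sets (borel :: real measure).
        emeasure \<mu> (E \<times> UNIV) = emeasure lborel (E \<inter> {0..1}) \<and>
        emeasure \<mu> (UNIV \<times> E) = emeasure lborel (E \<inter> {0..1}))"

abbreviation unit_borel :: "real measure" where
  "unit_borel \<equiv> restrict_space borel {0..1}"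

definition markov_kernel_of :: "(real \<times> real) measure \<Rightarrow> (real \<Rightarrow> real measure) \<Rightarrow> bool" where
  "markov_kernel_of \<mu> K \<longleftrightarrow>
     (\<forall>x \<in> {0..1}. sets (K x) = sets unit_borel \<and> emeasure (K x) {0..1} = 1) \<and>
     (\<forall>E \<in> sets unit_borel. (\<lambda>x. measure (K x) E) \<in> borel_measurable unit_borel) \<and>
     (\<forall>E1 \<in> sets unit_borel. \<forall>E2 \<in> sets unit_borel.
        (\<integral>\<^sup>+ x \<in> E1. ennreal (measure (K x) E2) \<partial>lborel) = emeasure \<mu> (E1 \<times> E2))"

definition cb_I :: "nat \<Rightarrow> nat \<Rightarrow> real set" where
  "cb_I N i = (if i = 1 then {0..1 / real N} else {(real i - 1) / real N <.. real i / real N})"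

definition cb_Q :: "nat \<Rightarrow> nat \<Rightarrow> nat \<Rightarrow> (real \<times> real) set" where
  "cb_Q N i j = cb_I N i \<times> cb_I N j"

text \<open>The stated version of the Markov kernel of CB_N(A), evaluated at (x,[0,y]).\<close>
definition cb_kernel :: "(real \<times> real) measure \<Rightarrow> nat \<Rightarrow> real \<Rightarrow> real \<Rightarrow> real" where
  "cb_kernel \<mu> N x y =
     (real N)\<^sup>2 * (\<Sum>i = 1..N. \<Sum>j = 1..N.
        measure \<mu> (cb_Q N i j) * indicator (cb_I N i) x * measure lborel ({0..y} \<inter> cb_I N j))"

definition cb_Delta :: "(real \<times> real) measure \<Rightarrow> (real \<Rightarrow> real measure) \<Rightarrow> nat \<Rightarrow> real" where
  "cb_Delta \<mu> K N =
     (SUP p \<in> {0..1} \<times> {0..1}. \<bar>cb_kernel \<mu> N (fst p) (snd p) - measure (K (fst p)) {0..snd p}\<bar>)"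

end

theory Submission
  imports Defs
begin

text \<open>If \<open>\<Delta>\<^sub>N \<rightarrow> 0\<close>, the checkerboard kernels converge to \<open>F(x,y) = K\<^sub>A(x,[0,y])\<close> uniformly
  on the unit square. They are continuous in \<open>y\<close>, so every \<open>F(x,\<cdot>)\<close> is continuous. In \<open>x\<close> they
  are step functions, constant on the cells of the grid of mesh \<open>1/N\<close>. Two points at distance
  less than \<open>1/(M(M+1))\<close> cannot be separated by both grids \<open>1/M\<close> and \<open>1/(M+1)\<close>, because distinct
  grid points \<open>k/M\<close> and \<open>l/(M+1)\<close> with \<open>0 < k < M\<close> are at least \<open>1/(M(M+1))\<close> apart; so some
  kernel of large index takes the same value at both points, and \<open>F\<close> is equicontinuous in \<open>x\<close>
  uniformly in \<open>y\<close>. Hence \<open>F\<close> is jointly continuous.\<close>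

lemma measure_Icc_inter_lipschitz:
  fixes A :: "real set"
  assumes "A \<in> sets borel"
  shows "1-lipschitz_on UNIV (\<lambda>y. measure lborel ({a..y} \<inter> A))"
proof -
  have diff_le: "measure lborel ({a..y'} \<inter> A) - measure lborel ({a..y} \<inter> A) \<le> dist y y'"
    for y y'
  proof -
    have "measure lborel ({a..y'} \<inter> A) - measure lborel ({a..y} \<inter> A)
        \<le> measure lborel ({a..y'} \<inter> A - {a..y} \<inter> A)"
      using assms
      by (intro measure_diff_le_measure_setdiff fmeasurable_Int_fmeasurable)
        (auto simp: fmeasurable_def emeasure_lborel_Icc_eq)
    also have "\<dots> \<le> measure lborel {y..y'}"
      using assms by (intro measure_mono_fmeasurable) (auto simp: fmeasurable_def emeasure_lborel_Icc_eq)
    finally show ?thesis by (simp add: dist_real_def split: if_splits)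
  qed
  show ?thesis
  proof (rule lipschitz_onI)
    fix y y' :: real
    show "dist (measure lborel ({a..y} \<inter> A)) (measure lborel ({a..y'} \<inter> A)) \<le> 1 * dist y y'"
      using diff_le[of y y'] diff_le[of y' y] by (simp add: dist_real_def dist_commute abs_le_iff)
  qed simp
qed

lemma continuous_on_Times_if_equicontinuous:
  fixes f :: "'a::metric_space \<Rightarrow> 'b::metric_space \<Rightarrow> 'c::metric_space"
  assumes cont: "\<And>x. x \<in> A \<Longrightarrow> continuous_on B (f x)"
    and equi: "\<And>e. 0 < e \<Longrightarrow>
      \<exists>d>0. \<forall>x\<in>A. \<forall>x'\<in>A. \<forall>y\<in>B. dist x x' < d \<longrightarrow> dist (f x y) (f x' y) < e"
  shows "continuous_on (A \<times> B) (\<lambda>(x, y). f x y)"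
  unfolding continuous_on_iff
proof (intro ballI allI impI)
  fix p e assume "p \<in> A \<times> B" "0 < (e::real)"
  then obtain x0 y0 where p: "p = (x0, y0)" "x0 \<in> A" "y0 \<in> B"
    by auto
  obtain d1 where
    d1: "0 < d1" "\<forall>x\<in>A. \<forall>x'\<in>A. \<forall>y\<in>B. dist x x' < d1 \<longrightarrow> dist (f x y) (f x' y) < e / 2"
    using equi[of "e / 2"] \<open>0 < e\<close> by auto
  obtain d2 where d2: "0 < d2" "\<forall>y\<in>B. dist y y0 < d2 \<longrightarrow> dist (f x0 y) (f x0 y0) < e / 2"
    using cont[OF \<open>x0 \<in> A\<close>] \<open>y0 \<in> B\<close> \<open>0 < e\<close> unfolding continuous_on_iff by (meson half_gt_zero)
  show "\<exists>d>0. \<forall>q\<in>A \<times> B. dist q p < d \<longrightarrow>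
          dist ((\<lambda>(x, y). f x y) q) ((\<lambda>(x, y). f x y) p) < e"
  proof (intro exI[of _ "min d1 d2"] conjI ballI impI)
    fix q assume "q \<in> A \<times> B" "dist q p < min d1 d2"
    then obtain x y where q: "q = (x, y)" "x \<in> A" "y \<in> B" "dist x x0 < d1" "dist y y0 < d2"
      using dist_fst_le[of q p] dist_snd_le[of q p] p by (cases q) auto
    have "dist (f x y) (f x0 y0) \<le> dist (f x y) (f x0 y) + dist (f x0 y) (f x0 y0)"
      by (rule dist_triangle)
    also have "\<dots> < e"
      using d1(2) d2(2) q p by fastforce
    finally show "dist ((\<lambda>(x, y). f x y) q) ((\<lambda>(x, y). f x y) p) < e"
      using p q by simp
  qed (use d1 d2 in simp)
qed

text \<open>The \<open>max\<close> accounts for the first cell \<open>I\<^sub>1\<^sup>N\<close> being closed at \<open>0\<close>.\<close>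
definition cb_cell :: "nat \<Rightarrow> real \<Rightarrow> nat" where
  "cb_cell N x = nat (max 1 \<lceil>real N * x\<rceil>)"

lemma mem_cb_I_iff_cb_cell:
  assumes "0 < N" "0 \<le> x" "1 \<le> i"
  shows "x \<in> cb_I N i \<longleftrightarrow> i = cb_cell N x"
proof (cases "i = 1")
  case True
  have "x \<le> 1 / real N \<longleftrightarrow> \<lceil>real N * x\<rceil> \<le> 1"
    using assms(1) by (simp add: field_simps ceiling_le_iff)
  moreover have "cb_cell N x = 1 \<longleftrightarrow> \<lceil>real N * x\<rceil> \<le> 1"
    unfolding cb_cell_def by linarith
  ultimately have "x \<le> 1 / real N \<longleftrightarrow> cb_cell N x = 1"
    by simp
  then show ?thesis
    using True assms(2) by (auto simp: cb_I_def)
next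
  case False
  have "x \<in> cb_I N i \<longleftrightarrow> real i - 1 < real N * x \<and> real N * x \<le> real i"
    using False assms(1) by (auto simp: cb_I_def field_simps)
  also have "\<dots> \<longleftrightarrow> \<lceil>real N * x\<rceil> = int i"
    by (simp add: ceiling_eq_iff)
  also have "\<dots> \<longleftrightarrow> i = cb_cell N x"
    unfolding cb_cell_def using False assms(3) by linarith
  finally show ?thesis .
qed

lemma grid_points_far_apart:
  fixes k l M :: nat
  assumes "0 < k" "k < M"
  shows "1 / (real M * (real M + 1)) \<le> \<bar>real k / real M - real l / (real M + 1)\<bar>"
proof -
  have "int k * (int M + 1) \<noteq> int l * int M"
  proof
    assume "int k * (int M + 1) = int l * int M"
    then have "int k = (int l - int k) * int M"
      by (simp add: algebra_simps)
    then have "M dvd k"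
      by (metis dvd_triv_right of_nat_dvd_iff)
    then show False
      using assms by (auto dest: dvd_imp_le)
  qed
  then have "1 \<le> \<bar>int k * (int M + 1) - int l * int M\<bar>"
    by linarith
  then have "1 \<le> real_of_int \<bar>int k * (int M + 1) - int l * int M\<bar>"
    by (simp only: of_int_1_le_iff)
  also have "\<dots> = \<bar>real k * (real M + 1) - real l * real M\<bar>"
    by simp
  also have "\<dots> / (real M * (real M + 1)) = \<bar>real k / real M - real l / (real M + 1)\<bar>"
    using assms by (simp add: field_simps abs_divide)
  ultimately show ?thesis
    by (metis divide_right_mono mult_nonneg_nonneg of_nat_0_le_iff add_nonneg_nonneg zero_le_one)
qed

lemma cb_cell_ne_imp_grid_point:
  assumes "0 \<le> x" "x \<le> x'" "cb_cell N x \<noteq> cb_cell N x'"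
  shows "\<exists>k. 0 < k \<and> x \<le> real k / real N \<and> real k / real N < x'"
proof (intro exI conjI)
  have real_cell: "real (cb_cell N z) = of_int (max 1 \<lceil>real N * z\<rceil>)" for z
    by (simp add: cb_cell_def)
  have "\<lceil>real N * x\<rceil> \<le> \<lceil>real N * x'\<rceil>"
    using assms(2) by (intro ceiling_mono mult_left_mono) auto
  then have "max 1 \<lceil>real N * x\<rceil> < \<lceil>real N * x'\<rceil>"
    using assms(3) unfolding cb_cell_def by linarith
  then have "real (cb_cell N x) < real N * x'"
    unfolding real_cell less_ceiling_iff .
  moreover have "real N * x \<le> real (cb_cell N x)"
    unfolding real_cell by (meson le_of_int_ceiling max.cobounded2 of_int_le_iff order_trans)
  moreover have "0 < N"
    using assms(3) by (rule contrapos_np) (simp add: cb_cell_def)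
  ultimately show "x \<le> real (cb_cell N x) / real N" "real (cb_cell N x) / real N < x'"
    by (simp_all add: field_simps)
  show "0 < cb_cell N x"
    by (simp add: cb_cell_def)
qed

lemma cb_cell_eq_or_cb_cell_Suc_eq:
  assumes "0 < M" "x \<in> {0..1}" "x' \<in> {0..1}" "\<bar>x - x'\<bar> < 1 / (real M * (real M + 1))"
  shows "cb_cell M x = cb_cell M x' \<or> cb_cell (Suc M) x = cb_cell (Suc M) x'"
proof -
  have ordered: "cb_cell M a = cb_cell M b \<or> cb_cell (Suc M) a = cb_cell (Suc M) b"
    if "0 \<le> a" "a \<le> b" "b \<le> 1" "b - a < 1 / (real M * (real M + 1))" for a b
  proof (rule ccontr)
    assume "\<not> ?thesis"
    then obtain k l where
      k: "0 < k" "a \<le> real k / real M" "real k / real M < b" and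
      l: "a \<le> real l / real (Suc M)" "real l / real (Suc M) < b"
      using cb_cell_ne_imp_grid_point \<open>0 \<le> a\<close> \<open>a \<le> b\<close> by metis
    have "real k < b * real M"
      using k \<open>0 < M\<close> by (simp add: field_simps)
    also have "\<dots> \<le> real M"
      using that by (intro mult_left_le_one_le) auto
    finally have "real k < real M" .
    then have "1 / (real M * (real M + 1)) \<le> \<bar>real k / real M - real l / (real M + 1)\<bar>"
      using k by (intro grid_points_far_apart) auto
    also have "\<dots> < 1 / (real M * (real M + 1))"
      using k l that by (auto simp: abs_less_iff ac_simps)
    finally show False by simp
  qed
  show ?thesis
  proof (cases "x \<le> x'")
    case True
    then show ?thesis
      using ordered[of x x'] assms by auto
  next
    case False
    then have "cb_cell M x' = cb_cell M x \<or> cb_cell (Suc M) x' = cb_cell (Suc M) x"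
      using ordered[of x' x] assms by (auto simp: abs_minus_commute)
    then show ?thesis
      by auto
  qed
qed

lemma cellwise_uniform_limit_equicontinuous:
  fixes G :: "nat \<Rightarrow> real \<Rightarrow> real \<Rightarrow> real"
  assumes unif: "uniform_limit ({0..1} \<times> {0..1}) (\<lambda>N (x, y). G N x y) (\<lambda>(x, y). F x y) sequentially"
    and cell: "\<And>N x x' y. 0 < N \<Longrightarrow> x \<in> {0..1} \<Longrightarrow> x' \<in> {0..1} \<Longrightarrow>
                 cb_cell N x = cb_cell N x' \<Longrightarrow> G N x y = G N x' y"
    and "0 < e"
  shows "\<exists>d>0. \<forall>x\<in>{0..1}. \<forall>x'\<in>{0..1}. \<forall>y\<in>{0..1}.
           dist x x' < d \<longrightarrow> dist (F x y) (F x' y) < e"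
proof -
  obtain M0 where M0: "\<And>N x y. M0 \<le> N \<Longrightarrow> x \<in> {0..1} \<Longrightarrow> y \<in> {0..1} \<Longrightarrow>
      dist (G N x y) (F x y) < e / 2"
    using uniform_limitD[OF unif, of "e / 2"] \<open>0 < e\<close> by (fastforce simp: eventually_sequentially)
  define M where "M = Suc M0"
  show ?thesis
  proof (intro exI[of _ "1 / (real M * (real M + 1))"] conjI ballI impI)
    fix x x' y :: real
    assume x: "x \<in> {0..1}" "x' \<in> {0..1}" and y: "y \<in> {0..1}"
      and close: "dist x x' < 1 / (real M * (real M + 1))"
    obtain N where N: "M0 \<le> N" "0 < N" "cb_cell N x = cb_cell N x'"
      using cb_cell_eq_or_cb_cell_Suc_eq[of M x x'] x close unfolding M_def dist_real_def
      by (metis le_SucI order_refl zero_less_Suc)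
    have "dist (F x y) (F x' y) \<le> dist (G N x y) (F x y) + dist (G N x' y) (F x' y)"
      using cell[OF N(2) x N(3)] by (metis dist_commute dist_triangle)
    also have "\<dots> < e"
      using M0[OF N(1) x(1) y] M0[OF N(1) x(2) y] by simp
    finally show "dist (F x y) (F x' y) < e" .
  qed (simp add: M_def)
qed

lemma continuous_on_cellwise_uniform_limit:
  fixes G :: "nat \<Rightarrow> real \<Rightarrow> real \<Rightarrow> real"
  assumes unif: "uniform_limit ({0..1} \<times> {0..1}) (\<lambda>N (x, y). G N x y) (\<lambda>(x, y). F x y) sequentially"
    and cell: "\<And>N x x' y. 0 < N \<Longrightarrow> x \<in> {0..1} \<Longrightarrow> x' \<in> {0..1} \<Longrightarrow>
                 cb_cell N x = cb_cell N x' \<Longrightarrow> G N x y = G N x' y"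
    and cont: "\<And>N x. continuous_on {0..1} (G N x)"
  shows "continuous_on ({0..1} \<times> {0..1}) (\<lambda>(x, y). F x y)"
proof (rule continuous_on_Times_if_equicontinuous)
  fix x :: real assume "x \<in> {0..1}"
  have "uniform_limit {0..1} (\<lambda>N. G N x) (F x) sequentially"
  proof (rule uniform_limitI)
    fix e :: real assume "0 < e"
    show "\<forall>\<^sub>F N in sequentially. \<forall>y\<in>{0..1}. dist (G N x y) (F x y) < e"
      using uniform_limitD[OF unif \<open>0 < e\<close>] \<open>x \<in> {0..1}\<close> by (auto elim!: eventually_mono)
  qed
  then show "continuous_on {0..1} (F x)"
    using cont by (intro uniform_limit_theorem[of _ "\<lambda>N. G N x"]) auto
qed (rule cellwise_uniform_limit_equicontinuous[OF unif cell])

lemma continuous_on_cb_kernel: "continuous_on UNIV (cb_kernel \<mu> N x)"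
proof -
  have "continuous_on UNIV (\<lambda>y. measure lborel ({0..y} \<inter> cb_I N j))" for j
    by (rule lipschitz_on_continuous_on, rule measure_Icc_inter_lipschitz) (simp add: cb_I_def)
  then show ?thesis
    unfolding cb_kernel_def by (intro continuous_intros)
qed

lemma cb_kernel_cong_cell:
  assumes "0 < N" "0 \<le> x" "0 \<le> x'" "cb_cell N x = cb_cell N x'"
  shows "cb_kernel \<mu> N x y = cb_kernel \<mu> N x' y"
  unfolding cb_kernel_def using assms
  by (intro arg_cong2[where f = "(*)"] refl sum.cong) (auto simp: indicator_def mem_cb_I_iff_cb_cell)

lemma markov_kernel_measure_le_1:
  assumes "markov_kernel_of \<mu> K" "x \<in> {0..1}"
  shows "measure (K x) A \<le> 1"
proof -
  have sets: "sets (K x) = sets unit_borel" and one: "emeasure (K x) {0..1} = 1"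
    using assms unfolding markov_kernel_of_def by auto
  have "space (K x) = {0..1}"
    using sets_eq_imp_space_eq[OF sets] by (simp add: space_restrict_space)
  then have "finite_measure (K x)"
    using one by (intro finite_measureI) simp
  then have "measure (K x) A \<le> measure (K x) (space (K x))"
    by (rule finite_measure.bounded_measure)
  also have "\<dots> = 1"
    using one \<open>space (K x) = {0..1}\<close> by (simp add: measure_def)
  finally show ?thesis .
qed

lemma cb_kernel_abs_le:
  assumes "y \<le> 1"
  shows "\<bar>cb_kernel \<mu> N x y\<bar> \<le> (real N)\<^sup>2 * (\<Sum>i = 1..N. \<Sum>j = 1..N. measure \<mu> (cb_Q N i j))"
proof -
  have lborel_le_1: "measure lborel ({0..y} \<inter> cb_I N j) \<le> 1" for j
  proof -
    have "measure lborel ({0..y} \<inter> cb_I N j) \<le> measure lborel {0..y}"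
      by (intro measure_mono_fmeasurable) (auto simp: cb_I_def fmeasurable_def emeasure_lborel_Icc_eq)
    also have "\<dots> \<le> 1"
      using assms by simp
    finally show ?thesis .
  qed
  have "0 \<le> cb_kernel \<mu> N x y"
    unfolding cb_kernel_def by (intro mult_nonneg_nonneg sum_nonneg) auto
  moreover have "cb_kernel \<mu> N x y \<le> (real N)\<^sup>2 * (\<Sum>i = 1..N. \<Sum>j = 1..N. measure \<mu> (cb_Q N i j))"
    unfolding cb_kernel_def
  proof (intro mult_left_mono sum_mono)
    fix i j
    have "measure \<mu> (cb_Q N i j) * indicator (cb_I N i) x * measure lborel ({0..y} \<inter> cb_I N j)
        \<le> measure \<mu> (cb_Q N i j) * 1 * 1"
      using lborel_le_1 by (intro mult_mono) (auto simp: indicator_def)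
    then show "measure \<mu> (cb_Q N i j) * indicator (cb_I N i) x * measure lborel ({0..y} \<inter> cb_I N j)
        \<le> measure \<mu> (cb_Q N i j)"
      by simp
  qed simp
  ultimately show ?thesis
    by simp
qed

lemma cb_kernel_error_le_cb_Delta:
  assumes "markov_kernel_of \<mu> K" "x \<in> {0..1}" "y \<in> {0..1}"
  shows "\<bar>cb_kernel \<mu> N x y - measure (K x) {0..y}\<bar> \<le> cb_Delta \<mu> K N"
proof -
  define err where "err p = \<bar>cb_kernel \<mu> N (fst p) (snd p) - measure (K (fst p)) {0..snd p}\<bar>" for p
  define B where "B = (real N)\<^sup>2 * (\<Sum>i = 1..N. \<Sum>j = 1..N. measure \<mu> (cb_Q N i j))"
  have "err p \<le> B + 1" if p_mem: "p \<in> {0..1} \<times> {0..1}" for p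
  proof -
    obtain x' y' where p: "p = (x', y')" "x' \<in> {0..1}" "y' \<in> {0..1}"
      using p_mem by auto
    have "\<bar>cb_kernel \<mu> N x' y'\<bar> \<le> B"
      unfolding B_def using p by (intro cb_kernel_abs_le) auto
    moreover have "measure (K x') {0..y'} \<le> 1"
      using assms(1) p(2) by (rule markov_kernel_measure_le_1)
    moreover have "0 \<le> measure (K x') {0..y'}"
      by (rule measure_nonneg)
    ultimately show ?thesis
      unfolding err_def p fst_conv snd_conv by arith
  qed
  then have "bdd_above (err ` ({0..1} \<times> {0..1}))"
    by (intro bdd_aboveI2)
  then show ?thesis
    using cSUP_upper[of "(x, y)" "{0..1} \<times> {0..1}" err] assms(2,3)
    unfolding cb_Delta_def err_def by simp
qed

lemma uniform_limit_cb_kernel: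
  assumes "markov_kernel_of \<mu> K" "cb_Delta \<mu> K \<longlonglongrightarrow> 0"
  shows "uniform_limit ({0..1} \<times> {0..1}) (\<lambda>N (x, y). cb_kernel \<mu> N x y)
           (\<lambda>(x, y). measure (K x) {0..y}) sequentially"
proof (rule uniform_limitI)
  fix e :: real assume "0 < e"
  with assms(2) have "\<forall>\<^sub>F N in sequentially. cb_Delta \<mu> K N < e"
    by (rule order_tendstoD)
  then show "\<forall>\<^sub>F N in sequentially. \<forall>p\<in>{0..1} \<times> {0..1}.
      dist ((\<lambda>(x, y). cb_kernel \<mu> N x y) p) ((\<lambda>(x, y). measure (K x) {0..y}) p) < e"
    by (auto simp: dist_real_def elim!: eventually_mono
        intro: cb_kernel_error_le_cb_Delta[OF assms(1), THEN le_less_trans])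
qed

theorem proposition3p6:
  fixes \<mu> :: "(real \<times> real) measure" and K :: "real \<Rightarrow> real measure"
  assumes "doubly_stochastic \<mu>"
    and "markov_kernel_of \<mu> K"
    and "\<not> continuous_on ({0..1} \<times> {0..1}) (\<lambda>(x, y). measure (K x) {0..y})"
  shows "\<not> (cb_Delta \<mu> K \<longlonglongrightarrow> 0)"
proof
  assume "cb_Delta \<mu> K \<longlonglongrightarrow> 0"
  then have "continuous_on ({0..1} \<times> {0..1}) (\<lambda>(x, y). measure (K x) {0..y})"
    by (intro continuous_on_cellwise_uniform_limit[of "cb_kernel \<mu>"] uniform_limit_cb_kernel
        assms(2) cb_kernel_cong_cell continuous_on_subset[OF continuous_on_cb_kernel]) auto
  with assms(3) show False ..
qed

end
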